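(* Let $\Omega_m$ be a finite set with $m$ elements, $\mathcal F=2^{\Omega_m}$. (a) For any set function $v:2^{\Omega_m}\to[0,\infty)$ and $A,B\subset\Omega_m$, if $A=\emptyset$, or $B=\emptyset$, or $A=\Omega_m$, or $B=\Omega_m$, or $A\subset B$, or $A\supset B$, or $A=B$, then $v(A\cap B)+v(A\cup B)=v(A)+v(B)$. (b) Let $v_0:2^{\Omega_m}\to[0,\infty)$ be non-decreasing with $v_0(\emptyset)=0$ and define $v_{n+1}(A)=\sup_{\mathcal I\in\Sigma}\mu_{v_n,\mathcal I}(A)$, $A\subset\Omega_m$, $n\ge0$. Then for every $n\ge1$ and $A,B\subset\Omega_m$, if $A\cap B=\emptyset$, or $A\cup B=\Omega_m$, or $|A|=1$, or $|A|=m-1$, then $v_n(A\cap B)+v_n(A\cup B)\le v_n(A)+v_n(B)$.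
   Context: $\Sigma$ denotes the set of all chains $\mathcal I\subset 2^{\Omega_m}$ (totally ordered by inclusion) containing $\emptyset$ and $\Omega_m$ and generating $2^{\Omega_m}$ as a $\sigma$-algebra (equivalently, maximal chains $\{\emptyset,\{\omega_{i_1}\},\{\omega_{i_1},\omega_{i_2}\},\dots,\Omega_m\}$ for an ordering $\omega_{i_1},\dots,\omega_{i_m}$ of $\Omega_m$). For non-decreasing $v$ and $\mathcal I\in\Sigma$, $\mu_{v,\mathcal I}$ is the unique (additive) measure on $2^{\Omega_m}$ with $\mu_{v,\mathcal I}(I)=v(I)$ for all $I\in\mathcal I$. A set function is non-decreasing if $v(A)\le v(B)$ for $A\subset B$. *)

theory Defs
  imports "HOL-Analysis.Analysis"
begin

definition nondecreasing_on :: "'a set \<Rightarrow> ('a set \<Rightarrow> real) \<Rightarrow> bool" where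
  "nondecreasing_on \<Omega> v \<longleftrightarrow> (\<forall>A B. A \<subseteq> B \<and> B \<subseteq> \<Omega> \<longrightarrow> v A \<le> v B)"

definition chains_Sigma :: "'a set \<Rightarrow> 'a set set set" where
  "chains_Sigma \<Omega> = {\<I>. \<I> \<subseteq> Pow \<Omega>
       \<and> (\<forall>I\<in>\<I>. \<forall>J\<in>\<I>. I \<subseteq> J \<or> J \<subseteq> I)
       \<and> {} \<in> \<I> \<and> \<Omega> \<in> \<I>
       \<and> sigma_sets \<Omega> \<I> = Pow \<Omega>}"

definition additive_on :: "'a set \<Rightarrow> ('a set \<Rightarrow> real) \<Rightarrow> bool" where
  "additive_on \<Omega> \<mu> \<longleftrightarrow> \<mu> {} = 0 \<and>
     (\<forall>A B. A \<subseteq> \<Omega> \<and> B \<subseteq> \<Omega> \<and> A \<inter> B = {} \<longrightarrow> \<mu> (A \<union> B) = \<mu> A + \<mu> B)"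

text \<open>\<open>\<mu>_{v,\<I>}\<close>: the unique additive measure on \<open>2^\<Omega>\<close> agreeing with \<open>v\<close> on \<open>\<I>\<close>
  (normalised to \<open>0\<close> outside \<open>2^\<Omega>\<close>, so that it is unique as a HOL function).\<close>
definition chain_measure :: "'a set \<Rightarrow> ('a set \<Rightarrow> real) \<Rightarrow> 'a set set \<Rightarrow> 'a set \<Rightarrow> real" where
  "chain_measure \<Omega> v \<I> = (THE \<mu>. additive_on \<Omega> \<mu> \<and> (\<forall>I\<in>\<I>. \<mu> I = v I)
                                  \<and> (\<forall>A. \<not> A \<subseteq> \<Omega> \<longrightarrow> \<mu> A = 0))"

fun v_iter :: "'a set \<Rightarrow> ('a set \<Rightarrow> real) \<Rightarrow> nat \<Rightarrow> 'a set \<Rightarrow> real" where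
  "v_iter \<Omega> v0 0 = v0"
| "v_iter \<Omega> v0 (Suc n) = (\<lambda>A. SUP \<I>\<in>chains_Sigma \<Omega>. chain_measure \<Omega> (v_iter \<Omega> v0 n) \<I> A)"

end

theory Submission
  imports Defs
begin

text \<open>Modularity is trivial for comparable sets, and a singleton or co-singleton \<open>A\<close> is
  comparable with \<open>B\<close> unless \<open>A \<inter> B = {}\<close> or \<open>A \<union> B = \<Omega>\<close>. For \<open>n \<ge> 1\<close>, \<open>v\<^sub>n\<close> is the pointwise
  maximum of finitely many additive measures \<open>\<mu>\<close>, all vanishing on \<open>{}\<close> and taking the same
  value \<open>v\<^sub>n\<^sub>-\<^sub>1(\<Omega>)\<close> on \<open>\<Omega>\<close>. So if \<open>A \<inter> B = {}\<close> (resp. \<open>A \<union> B = \<Omega>\<close>), a chain maximising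
  \<open>\<mu>(A \<union> B)\<close> (resp. \<open>\<mu>(A \<inter> B)\<close>) maximises both terms on the left, and modularity of that
  single measure gives the inequality.\<close>

lemma modular_if_comparable:
  fixes v :: "'a set \<Rightarrow> 'b::ab_semigroup_add"
  assumes "A \<subseteq> B \<or> B \<subseteq> A"
  shows "v (A \<inter> B) + v (A \<union> B) = v A + v B"
  using assms by (auto simp: Int_absorb1 Int_absorb2 Un_absorb1 Un_absorb2 add.commute)

lemma card_1_disjoint_or_subset:
  assumes "card A = 1"
  shows "A \<inter> B = {} \<or> A \<subseteq> B"
  using assms by (auto simp: card_1_singleton_iff)

lemma card_minus_1_covering_or_superset:
  assumes "finite \<Omega>" "A \<subseteq> \<Omega>" "B \<subseteq> \<Omega>" "card A = card \<Omega> - 1"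
  shows "A \<union> B = \<Omega> \<or> B \<subseteq> A"
proof (cases "\<Omega> = {}")
  case False
  have "card (\<Omega> - A) = 1"
    using assms False by (simp add: card_Diff_subset finite_subset card_gt_0_iff Suc_leI)
  then obtain a where "\<Omega> - A = {a}" by (rule card_1_singletonE)
  then show ?thesis using assms(2,3) by (cases "a \<in> B") auto
qed (use assms in auto)

lemma additive_on_modular:
  assumes "additive_on \<Omega> \<mu>" "A \<subseteq> \<Omega>" "B \<subseteq> \<Omega>"
  shows "\<mu> (A \<inter> B) + \<mu> (A \<union> B) = \<mu> A + \<mu> B"
proof -
  have add: "\<mu> (X \<union> Y) = \<mu> X + \<mu> Y" if "X \<subseteq> \<Omega>" "Y \<subseteq> \<Omega>" "X \<inter> Y = {}" for X Y
    using assms(1) that unfolding additive_on_def by blast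
  have "\<mu> (A \<union> B) = \<mu> A + \<mu> (B - A)"
    using add[of A "B - A"] assms(2,3) by (simp add: Diff_subset_conv le_supI2)
  moreover have "\<mu> B = \<mu> (B \<inter> A) + \<mu> (B - A)"
    using add[of "B \<inter> A" "B - A"] assms(2,3) by (auto simp: Int_Diff_Un)
  ultimately show ?thesis by (simp add: Int_commute)
qed

lemma additive_on_finite_UN:
  assumes "additive_on \<Omega> \<mu>" "finite F" "disjoint_family_on A F" "\<forall>i\<in>F. A i \<subseteq> \<Omega>"
  shows "\<mu> (\<Union>i\<in>F. A i) = (\<Sum>i\<in>F. \<mu> (A i))"
  using assms(2-4)
proof (induction F rule: finite_induct)
  case empty
  then show ?case using assms(1) by (simp add: additive_on_def)
next
  case (insert x F)
  have "A x \<inter> (\<Union>i\<in>F. A i) = {}"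
    using insert.prems(1) insert.hyps(2) unfolding disjoint_family_on_def by auto
  moreover have "A x \<subseteq> \<Omega>" "(\<Union>i\<in>F. A i) \<subseteq> \<Omega>" using insert.prems(2) by auto
  ultimately have "\<mu> (A x \<union> (\<Union>i\<in>F. A i)) = \<mu> (A x) + \<mu> (\<Union>i\<in>F. A i)"
    using assms(1) unfolding additive_on_def by blast
  also have "\<mu> (\<Union>i\<in>F. A i) = (\<Sum>i\<in>F. \<mu> (A i))"
    using insert.IH insert.prems by (simp add: disjoint_family_on_def)
  finally show ?case using insert.hyps by simp
qed

lemma additive_on_sum:
  assumes "finite \<Omega>"
  shows "additive_on \<Omega> (\<lambda>X. if X \<subseteq> \<Omega> then sum f X else 0)"
  unfolding additive_on_def
proof (intro conjI allI impI)
  fix A B assume "A \<subseteq> \<Omega> \<and> B \<subseteq> \<Omega> \<and> A \<inter> B = {}"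
  moreover from this have "finite A" "finite B" using assms finite_subset by auto
  ultimately show "(if A \<union> B \<subseteq> \<Omega> then sum f (A \<union> B) else 0) =
      (if A \<subseteq> \<Omega> then sum f A else 0) + (if B \<subseteq> \<Omega> then sum f B else 0)"
    by (simp add: sum.union_disjoint)
qed simp

lemma chain_eq_sum_of_point_masses:
  fixes v :: "'a set \<Rightarrow> real"
  assumes "finite \<I>" "chain\<^sub>\<subseteq> \<I>" "\<forall>J\<in>\<I>. finite J" "v {} = 0"
  shows "\<exists>f. \<forall>J\<in>\<I>. v J = sum f J"
  using assms(1-3)
proof (induction \<I> rule: finite_remove_induct)
  case empty
  then show ?case by simp
next
  case (remove \<I>)
  have Union_in: "\<Union>\<J> \<in> \<J>" if "\<J> \<subseteq> \<I>" "\<J> \<noteq> {}" for \<J>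
    using that remove.hyps(1) remove.prems(1)
    by (intro Union_in_chain) (auto intro: finite_subset simp: subset_chain_def chain_subset_def)
  define M where "M = \<Union>\<I>"
  define L where "L = \<Union>(\<I> - {M})"
  have "M \<in> \<I>" unfolding M_def using Union_in remove.hyps(2) by blast
  have "\<exists>f'. \<forall>J\<in>\<I> - {M}. v J = sum f' J"
    by (rule remove.IH[OF \<open>M \<in> \<I>\<close>]) (use remove.prems in \<open>auto simp: chain_subset_def\<close>)
  then obtain f' where f': "\<forall>J\<in>\<I> - {M}. v J = sum f' J" ..
  have "L \<subseteq> M" "finite M" using \<open>M \<in> \<I>\<close> remove.prems(2) unfolding L_def M_def by auto
  have vL: "v L = sum f' L"
  proof (cases "\<I> - {M} = {}")
    case True
    then show ?thesis unfolding L_def True using assms(4) by simp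
  next
    case False
    then show ?thesis using f' Union_in[of "\<I> - {M}"] unfolding L_def by blast
  qed
  \<comment> \<open>the increment \<open>v M - v L\<close> is spread uniformly over the new points \<open>M - L\<close>\<close>
  define f where "f \<omega> = (if \<omega> \<in> M - L then (v M - v L) / card (M - L) else f' \<omega>)" for \<omega>
  have new_points: "sum f (M - L) = v M - v L"
  proof (cases "M - L = {}")
    case True
    then show ?thesis using \<open>L \<subseteq> M\<close> by auto
  next
    case False
    then show ?thesis using \<open>finite M\<close> by (simp add: f_def)
  qed
  have "v J = sum f J" if "J \<in> \<I>" for J
  proof (cases "J = M")
    case True
    have "sum f M = sum f (M - L) + sum f L"
      using \<open>finite M\<close> \<open>L \<subseteq> M\<close> by (simp add: sum.subset_diff)
    also have "sum f L = sum f' L" unfolding f_def by (rule sum.cong) auto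
    finally show ?thesis using True new_points vL by simp
  next
    case False
    then have "J \<in> \<I> - {M}" "J \<subseteq> L" using that unfolding L_def by auto
    moreover have "sum f J = sum f' J" using \<open>J \<subseteq> L\<close> unfolding f_def by (intro sum.cong) auto
    ultimately show ?thesis using f' by simp
  qed
  then show ?case by blast
qed

lemma chain_Int_stable: "chain\<^sub>\<subseteq> \<I> \<Longrightarrow> Int_stable \<I>"
  unfolding chain_subset_def Int_stable_def by (metis Int_absorb1 Int_absorb2)

lemma additive_on_eq_if_eq_on_generator:
  assumes "finite \<Omega>" "Int_stable \<G>" "\<G> \<subseteq> Pow \<Omega>" "\<Omega> \<in> \<G>" "sigma_sets \<Omega> \<G> = Pow \<Omega>"
    and "additive_on \<Omega> \<mu>" "additive_on \<Omega> \<nu>" "\<forall>G\<in>\<G>. \<mu> G = \<nu> G" "X \<subseteq> \<Omega>"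
  shows "\<mu> X = \<nu> X"
proof -
  have "X \<in> sigma_sets \<Omega> \<G>" using assms(5,9) by auto
  from assms(2,3) this show ?thesis
  proof (induction rule: sigma_sets_induct_disjoint)
    case (basic A)
    then show ?case using assms(8) by blast
  next
    case empty
    then show ?case using assms(6,7) by (simp add: additive_on_def)
  next
    case (compl A)
    then have "A \<subseteq> \<Omega>" using assms(5) by auto
    moreover from this have "\<Omega> = A \<union> (\<Omega> - A)" by auto
    ultimately have "\<mu> \<Omega> = \<mu> A + \<mu> (\<Omega> - A)" "\<nu> \<Omega> = \<nu> A + \<nu> (\<Omega> - A)"
      using assms(6,7) unfolding additive_on_def by (metis Diff_disjoint Diff_subset)+
    then show ?case using compl.IH assms(4,8) by auto
  next
    case (union A)
    have A_sub: "A i \<subseteq> \<Omega>" for i using union.hyps(2) assms(5) by auto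
    \<comment> \<open>a disjoint family in the finite \<open>Pow \<Omega>\<close> has only finitely many nonempty members\<close>
    define N where "N = {i. A i \<noteq> {}}"
    have "inj_on A N"
      using union.hyps(1) unfolding N_def disjoint_family_on_def inj_on_def by fastforce
    moreover have "A ` N \<subseteq> Pow \<Omega>" using A_sub by auto
    ultimately have "finite N" using assms(1) by (metis finite_Pow_iff finite_imageD finite_subset)
    have "disjoint_family_on A N" using union.hyps(1) by (auto simp: disjoint_family_on_def)
    have "(\<Union>i. A i) = (\<Union>i\<in>N. A i)" unfolding N_def by auto
    also have "\<mu> \<dots> = (\<Sum>i\<in>N. \<mu> (A i))"
      using additive_on_finite_UN[OF assms(6) \<open>finite N\<close> \<open>disjoint_family_on A N\<close>] A_sub by auto
    also have "\<dots> = (\<Sum>i\<in>N. \<nu> (A i))" using union.IH by simp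
    also have "\<dots> = \<nu> (\<Union>i\<in>N. A i)"
      using additive_on_finite_UN[OF assms(7) \<open>finite N\<close> \<open>disjoint_family_on A N\<close>] A_sub by auto
    finally show ?case unfolding \<open>(\<Union>i. A i) = (\<Union>i\<in>N. A i)\<close> .
  qed
qed

lemma chain_measure_spec:
  assumes "finite \<Omega>" "\<I> \<in> chains_Sigma \<Omega>" "v {} = 0"
  shows "additive_on \<Omega> (chain_measure \<Omega> v \<I>)" "\<forall>J\<in>\<I>. chain_measure \<Omega> v \<I> J = v J"
proof -
  let ?P = "\<lambda>\<mu>. additive_on \<Omega> \<mu> \<and> (\<forall>I\<in>\<I>. \<mu> I = v I) \<and> (\<forall>A. \<not> A \<subseteq> \<Omega> \<longrightarrow> \<mu> A = 0)"
  have \<I>: "\<I> \<subseteq> Pow \<Omega>" "chain\<^sub>\<subseteq> \<I>" "\<Omega> \<in> \<I>" "sigma_sets \<Omega> \<I> = Pow \<Omega>"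
    using assms(2) unfolding chains_Sigma_def chain_subset_def by auto
  moreover have "finite \<I>" using assms(1) \<I>(1) by (meson finite_Pow_iff finite_subset)
  ultimately obtain f where f: "\<forall>J\<in>\<I>. v J = sum f J"
    using chain_eq_sum_of_point_masses[of \<I> v] assms(1,3) by (meson PowD finite_subset subsetD)
  define \<mu> where "\<mu> X = (if X \<subseteq> \<Omega> then sum f X else 0)" for X
  have "?P \<mu>"
    using additive_on_sum[OF assms(1)] f \<I>(1) unfolding \<mu>_def by (auto simp: fun_eq_iff)
  moreover have "\<mu>' = \<mu>" if "?P \<mu>'" for \<mu>'
  proof
    fix X
    show "\<mu>' X = \<mu> X"
      using additive_on_eq_if_eq_on_generator[OF assms(1) chain_Int_stable[OF \<I>(2)] \<I>(1,3,4), of \<mu>' \<mu> X]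
        that \<open>?P \<mu>\<close> by (cases "X \<subseteq> \<Omega>") auto
  qed
  ultimately have "?P (chain_measure \<Omega> v \<I>)" unfolding chain_measure_def by (rule theI)
  then show "additive_on \<Omega> (chain_measure \<Omega> v \<I>)" "\<forall>J\<in>\<I>. chain_measure \<Omega> v \<I> J = v J"
    by blast+
qed

lemma prefix_chain_in_chains_Sigma:
  assumes "distinct xs"
  shows "(\<lambda>k. set (take k xs)) ` {..length xs} \<in> chains_Sigma (set xs)"
    (is "?\<I> \<in> _")
proof -
  have sub: "?\<I> \<subseteq> Pow (set xs)" by (auto dest: in_set_takeD)
  have "set (take i xs) \<subseteq> set (take j xs) \<or> set (take j xs) \<subseteq> set (take i xs)" for i j
    by (metis nat_le_linear set_take_subset_set_take)
  then have chain: "\<forall>I\<in>?\<I>. \<forall>J\<in>?\<I>. I \<subseteq> J \<or> J \<subseteq> I" by blast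
  have "{} \<in> ?\<I>" by (force intro: image_eqI[of _ _ 0])
  moreover have "set xs \<in> ?\<I>" by (force intro: image_eqI[of _ _ "length xs"])
  moreover have "sigma_sets (set xs) ?\<I> = Pow (set xs)"
  proof
    show "sigma_sets (set xs) ?\<I> \<subseteq> Pow (set xs)" using sigma_sets_into_sp[OF sub] by blast
    interpret sigma_algebra "set xs" "sigma_sets (set xs) ?\<I>"
      using sub by (rule sigma_algebra_sigma_sets)
    have point: "{xs ! k} \<in> sigma_sets (set xs) ?\<I>" if "k < length xs" for k
    proof -
      have "set (take (Suc k) xs) - set (take k xs) = {xs ! k}"
        using that assms distinct_take[OF assms, of "Suc k"] by (auto simp: take_Suc_conv_app_nth)
      moreover have "set (take (Suc k) xs) - set (take k xs) \<in> sigma_sets (set xs) ?\<I>"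
        using that by (intro Diff sigma_sets.Basic) auto
      ultimately show ?thesis by simp
    qed
    show "Pow (set xs) \<subseteq> sigma_sets (set xs) ?\<I>"
    proof
      fix X assume "X \<in> Pow (set xs)"
      then have "(\<lambda>x. {x}) ` X \<subseteq> sigma_sets (set xs) ?\<I>" using point by (force simp: in_set_conv_nth)
      moreover have "finite X" using \<open>X \<in> Pow (set xs)\<close> by (auto intro: finite_subset)
      ultimately have "\<Union>((\<lambda>x. {x}) ` X) \<in> sigma_sets (set xs) ?\<I>" by (intro finite_Union) auto
      then show "X \<in> sigma_sets (set xs) ?\<I>" by simp
    qed
  qed
  ultimately show ?thesis using sub chain unfolding chains_Sigma_def by blast
qed

lemma chains_Sigma_nonempty: "finite \<Omega> \<Longrightarrow> chains_Sigma \<Omega> \<noteq> {}"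
  by (metis empty_iff finite_distinct_list prefix_chain_in_chains_Sigma)

lemma finite_chains_Sigma: "finite \<Omega> \<Longrightarrow> finite (chains_Sigma \<Omega>)"
  by (rule finite_subset[of _ "Pow (Pow \<Omega>)"]) (auto simp: chains_Sigma_def)

lemma SUP_additive_on_submodular:
  fixes g :: "'i \<Rightarrow> 'a set \<Rightarrow> real"
  assumes "finite S" "S \<noteq> {}" "\<forall>I\<in>S. additive_on \<Omega> (g I)" "\<forall>I\<in>S. g I \<Omega> = c"
    and "A \<subseteq> \<Omega>" "B \<subseteq> \<Omega>" "A \<inter> B = {} \<or> A \<union> B = \<Omega>"
  shows "(SUP I\<in>S. g I (A \<inter> B)) + (SUP I\<in>S. g I (A \<union> B)) \<le> (SUP I\<in>S. g I A) + (SUP I\<in>S. g I B)"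
proof -
  have upper: "g I X \<le> (SUP J\<in>S. g J X)" if "I \<in> S" for I X
    by (rule cSUP_upper[OF that]) (intro bdd_above_finite finite_imageI assms(1))
  have attained: "\<exists>I\<in>S. (SUP J\<in>S. g J X) = g I X" for X
  proof -
    obtain I where "I \<in> S" "Max ((\<lambda>J. g J X) ` S) = g I X" by (rule obtains_MAX[OF assms(1,2)])
    moreover have "(SUP J\<in>S. g J X) = Max ((\<lambda>J. g J X) ` S)"
      using assms(1,2) by (simp add: cSup_eq_Max)
    ultimately show ?thesis by auto
  qed
  have const: "(SUP J\<in>S. g J X) = g I X" if "\<forall>J\<in>S. g J X = g I X" for I X
  proof -
    have "(SUP J\<in>S. g J X) = (SUP J\<in>S. g I X)" using that by (intro SUP_cong) auto
    then show ?thesis using assms(2) by simp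
  qed
  have common_maximiser: ?thesis
    if "I \<in> S" "(SUP J\<in>S. g J (A \<inter> B)) = g I (A \<inter> B)" "(SUP J\<in>S. g J (A \<union> B)) = g I (A \<union> B)" for I
  proof -
    have "(SUP J\<in>S. g J (A \<inter> B)) + (SUP J\<in>S. g J (A \<union> B)) = g I (A \<inter> B) + g I (A \<union> B)"
      by (simp only: that(2,3))
    also have "\<dots> = g I A + g I B"
      using additive_on_modular assms(3,5,6) that(1) by blast
    also have "\<dots> \<le> (SUP J\<in>S. g J A) + (SUP J\<in>S. g J B)"
      by (intro add_mono upper that(1))
    finally show ?thesis .
  qed
  from assms(7) show ?thesis
  proof
    assume "A \<inter> B = {}"
    have "g J {} = 0" if "J \<in> S" for J using assms(3) that unfolding additive_on_def by blast
    then have "(SUP J\<in>S. g J (A \<inter> B)) = g I (A \<inter> B)" if "I \<in> S" for I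
      using const that assms(2) \<open>A \<inter> B = {}\<close> by simp
    moreover obtain I where "I \<in> S" "(SUP J\<in>S. g J (A \<union> B)) = g I (A \<union> B)" using attained by blast
    ultimately show ?thesis using common_maximiser by blast
  next
    assume "A \<union> B = \<Omega>"
    then have "(SUP J\<in>S. g J (A \<union> B)) = g I (A \<union> B)" if "I \<in> S" for I
      using const assms(2,4) that by simp
    moreover obtain I where "I \<in> S" "(SUP J\<in>S. g J (A \<inter> B)) = g I (A \<inter> B)" using attained by blast
    ultimately show ?thesis using common_maximiser by blast
  qed
qed

lemma v_iter_empty:
  assumes "finite \<Omega>" "v0 {} = 0"
  shows "v_iter \<Omega> v0 n {} = 0"
proof (induction n)
  case 0
  then show ?case using assms(2) by simp
next
  case (Suc n)
  then have "\<forall>\<I>\<in>chains_Sigma \<Omega>. chain_measure \<Omega> (v_iter \<Omega> v0 n) \<I> {} = 0"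
    using chain_measure_spec(1)[OF assms(1)] by (simp add: additive_on_def)
  then show ?case using chains_Sigma_nonempty[OF assms(1)] by (simp add: cSup_eq_maximum)
qed

lemma v_iter_Suc_submodular:
  assumes "finite \<Omega>" "v0 {} = 0" "A \<subseteq> \<Omega>" "B \<subseteq> \<Omega>" "A \<inter> B = {} \<or> A \<union> B = \<Omega>"
  shows "v_iter \<Omega> v0 (Suc n) (A \<inter> B) + v_iter \<Omega> v0 (Suc n) (A \<union> B)
    \<le> v_iter \<Omega> v0 (Suc n) A + v_iter \<Omega> v0 (Suc n) B"
proof -
  let ?v = "v_iter \<Omega> v0 n"
  have "?v {} = 0" using v_iter_empty assms(1,2) by blast
  then have additive: "additive_on \<Omega> (chain_measure \<Omega> ?v \<I>)"
    and total: "chain_measure \<Omega> ?v \<I> \<Omega> = ?v \<Omega>" if "\<I> \<in> chains_Sigma \<Omega>" for \<I>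
    using chain_measure_spec[OF assms(1) that] that by (auto simp: chains_Sigma_def)
  show ?thesis
    unfolding v_iter.simps
    by (rule SUP_additive_on_submodular[OF finite_chains_Sigma[OF assms(1)] chains_Sigma_nonempty[OF assms(1)]
          _ _ assms(3-5)]) (use additive total in blast)+
qed

theorem proposition21:
  fixes \<Omega> :: "'a set" and m :: nat
  assumes "finite \<Omega>" and "card \<Omega> = m"
  shows "(\<forall>(v :: 'a set \<Rightarrow> real) A B.
           (\<forall>C. C \<subseteq> \<Omega> \<longrightarrow> 0 \<le> v C) \<longrightarrow> A \<subseteq> \<Omega> \<longrightarrow> B \<subseteq> \<Omega> \<longrightarrow>
           (A = {} \<or> B = {} \<or> A = \<Omega> \<or> B = \<Omega> \<or> A \<subseteq> B \<or> B \<subseteq> A \<or> A = B) \<longrightarrow>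
           v (A \<inter> B) + v (A \<union> B) = v A + v B) \<and>
        (\<forall>v0 :: 'a set \<Rightarrow> real.
           (\<forall>C. C \<subseteq> \<Omega> \<longrightarrow> 0 \<le> v0 C) \<longrightarrow> nondecreasing_on \<Omega> v0 \<longrightarrow> v0 {} = 0 \<longrightarrow>
           (\<forall>n \<ge> 1. \<forall>A B. A \<subseteq> \<Omega> \<longrightarrow> B \<subseteq> \<Omega> \<longrightarrow>
              (A \<inter> B = {} \<or> A \<union> B = \<Omega> \<or> card A = 1 \<or> card A = m - 1) \<longrightarrow>
              v_iter \<Omega> v0 n (A \<inter> B) + v_iter \<Omega> v0 n (A \<union> B)
                \<le> v_iter \<Omega> v0 n A + v_iter \<Omega> v0 n B))"
proof (intro conjI allI impI)
  fix v :: "'a set \<Rightarrow> real" and A B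
  assume "A \<subseteq> \<Omega>" "B \<subseteq> \<Omega>" "A = {} \<or> B = {} \<or> A = \<Omega> \<or> B = \<Omega> \<or> A \<subseteq> B \<or> B \<subseteq> A \<or> A = B"
  then have "A \<subseteq> B \<or> B \<subseteq> A" by auto
  then show "v (A \<inter> B) + v (A \<union> B) = v A + v B" by (rule modular_if_comparable)
next
  fix v0 :: "'a set \<Rightarrow> real" and n :: nat and A B
  assume "v0 {} = 0" "n \<ge> 1" "A \<subseteq> \<Omega>" "B \<subseteq> \<Omega>"
    and "A \<inter> B = {} \<or> A \<union> B = \<Omega> \<or> card A = 1 \<or> card A = m - 1"
  then consider "A \<inter> B = {} \<or> A \<union> B = \<Omega>" | "A \<subseteq> B \<or> B \<subseteq> A"
    using card_1_disjoint_or_subset card_minus_1_covering_or_superset assms by blast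
  moreover obtain k where "n = Suc k" using \<open>n \<ge> 1\<close> by (cases n) auto
  ultimately show "v_iter \<Omega> v0 n (A \<inter> B) + v_iter \<Omega> v0 n (A \<union> B) \<le> v_iter \<Omega> v0 n A + v_iter \<Omega> v0 n B"
    using v_iter_Suc_submodular[of \<Omega> v0 A B, OF assms(1) \<open>v0 {} = 0\<close> \<open>A \<subseteq> \<Omega>\<close> \<open>B \<subseteq> \<Omega>\<close>]
      modular_if_comparable[of A B "v_iter \<Omega> v0 n"] by cases auto
qed

end
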